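(* Let $\gamma>0$ and let $\mu$ be a distribution on $\mathbb{R}$ with $\bar\mu(x)>0$ for all $x\in\mathbb{R}$. For $c>0$ let $f_c(x):=c_1^{-1}e^{-\gamma x}(1-x/c)1_{[0,c)}(x)$, where $c_1:=\int_0^c e^{-\gamma x}(1-x/c)\,dx$, and let $\mu_c:=(f_c(x)\,dx)*\mu$. Then: (i) For each fixed $c>0$: $\widehat\mu(\gamma)<\infty$ and $\widehat\mu(\gamma+iz)\ne0$ for every $z\in\mathbb{R}$ if and only if $\widehat{\mu_c}(\gamma)<\infty$ and $\widehat{\mu_c}(\gamma+iz)\ne0$ for every $z\in\mathbb{R}$. (ii) For each $n\in\mathbb{N}$: $\mu^{n*}\in\mathcal{S}(\gamma)$ if and only if $\mu_c^{n*}\in\mathcal{S}(\gamma)$ for every $c>0$.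
   Context: For a probability distribution $\rho$ on $\mathbb{R}$: $\bar\rho(x):=\rho((x,\infty))$, $\rho^{n*}$ is the $n$-th convolution power, $\widehat\rho(\gamma):=\int e^{\gamma x}\rho(dx)$ and, when finite, $\widehat\rho(\gamma+iz):=\int e^{(\gamma+iz)x}\rho(dx)$. $f\sim g$ means $f(x)/g(x)\to1$ as $x\to\infty$. For $\gamma\ge0$: $\rho\in\mathcal{L}(\gamma)$ if $\bar\rho(x)>0$ for all $x$ and $\bar\rho(x+a)\sim e^{-\gamma a}\bar\rho(x)$ for every $a\in\mathbb{R}$; $\rho\in\mathcal{S}(\gamma)$ if $\rho\in\mathcal{L}(\gamma)$, $\widehat\rho(\gamma)<\infty$ and $\overline{\rho^{2*}}(x)\sim2\widehat\rho(\gamma)\bar\rho(x)$. *)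

theory Defs
  imports "HOL-Probability.Probability" "HOL-Probability.Convolution" "HOL-Library.Landau_Symbols"
begin

definition distr_on_R :: "real measure \<Rightarrow> bool" where
  "distr_on_R M \<longleftrightarrow> prob_space M \<and> sets M = sets borel"

definition tail :: "real measure \<Rightarrow> real \<Rightarrow> real" where
  "tail M x = measure M {x<..}"

primrec conv_pow :: "real measure \<Rightarrow> nat \<Rightarrow> real measure" where
  "conv_pow M 0 = return borel 0"
| "conv_pow M (Suc n) = (M \<star> conv_pow M n)"

definition mgf_hat :: "real measure \<Rightarrow> real \<Rightarrow> ennreal" where
  "mgf_hat M g = (\<integral>\<^sup>+ x. ennreal (exp (g * x)) \<partial>M)"

definition cmgf_hat :: "real measure \<Rightarrow> real \<Rightarrow> real \<Rightarrow> complex" where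
  "cmgf_hat M g z = (CLINT x|M. exp (Complex g z * complex_of_real x))"

definition class_L :: "real \<Rightarrow> real measure \<Rightarrow> bool" where
  "class_L g M \<longleftrightarrow> (\<forall>x. tail M x > 0) \<and>
     (\<forall>a. (\<lambda>x. tail M (x + a)) \<sim>[at_top] (\<lambda>x. exp (- g * a) * tail M x))"

definition class_S :: "real \<Rightarrow> real measure \<Rightarrow> bool" where
  "class_S g M \<longleftrightarrow> class_L g M \<and> mgf_hat M g < \<infinity> \<and>
     (\<lambda>x. tail (M \<star> M) x) \<sim>[at_top] (\<lambda>x. 2 * enn2real (mgf_hat M g) * tail M x)"

definition c_one :: "real \<Rightarrow> real \<Rightarrow> real" where
  "c_one g c = (LBINT x:{0..c}. exp (- g * x) * (1 - x / c))"

definition f_c :: "real \<Rightarrow> real \<Rightarrow> real \<Rightarrow> real" where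
  "f_c g c x = indicator {0..<c} x * exp (- g * x) * (1 - x / c) / c_one g c"

definition mu_c :: "real \<Rightarrow> real \<Rightarrow> real measure \<Rightarrow> real measure" where
  "mu_c g c M = (density lborel (\<lambda>x. ennreal (f_c g c x)) \<star> M)"

end

theory Submission
  imports Defs
begin

text \<open>
  Let F_c be the distribution with density f_c, so that \<mu>_c = F_c \<star> \<mu> and F_c lives on [0, c].
  Both transforms are multiplicative under convolution, and the transform of F_c is finite and,
  by an explicit integration, has no zeros on the line \<gamma> + iz; this gives (i).

  For (ii), \<mu>_c^{n*} = F_c^{n*} \<star> \<mu>^{n*} with F_c^{n*} living on [0, nc]. If G lives on [0, K],
  the tail of G \<star> H at x lies between the tails of H at x and at x - K. When H is in L(\<gamma>),
  dominated convergence turns this into tail(G \<star> H) ~ mgf_hat G \<gamma> * tail(H), and S(\<gamma>) passes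
  from H to G \<star> H because (G \<star> H)^{2*} = G^{2*} \<star> H^{2*}. Conversely, the same squeeze
  recovers the defining limits for H from those of G \<star> H up to factors exp(\<plusminus>2\<gamma>K), which
  disappear as K \<rightarrow> 0. For n = 0 both sides fail: the Dirac mass at 0 has no mass beyond 0.
\<close>

section \<open>Convolution of distributions on the real line\<close>

lemma distr_on_R_prob_space: "distr_on_R M \<Longrightarrow> prob_space M"
  and distr_on_R_sets: "distr_on_R M \<Longrightarrow> sets M = sets borel"
  and distr_on_R_finite_measure: "distr_on_R M \<Longrightarrow> finite_measure M"
  by (simp_all add: distr_on_R_def prob_space.finite_measure)

lemmas distr_on_RD = distr_on_R_finite_measure distr_on_R_sets

lemma distr_on_R_return_0: "distr_on_R (return borel (0::real))"
  by (simp add: distr_on_R_def prob_space_return)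

lemma distr_on_R_convolution:
  assumes "distr_on_R G" "distr_on_R H"
  shows "distr_on_R (G \<star> H)"
proof -
  interpret G: prob_space G using assms(1) by (rule distr_on_R_prob_space)
  interpret H: prob_space H using assms(2) by (rule distr_on_R_prob_space)
  interpret pair_prob_space G H ..
  have [measurable_cong]: "sets G = sets borel" "sets H = sets borel"
    using assms by (simp_all add: distr_on_R_sets)
  show ?thesis
    unfolding distr_on_R_def convolution_def by (auto intro!: prob_space_distr)
qed

lemma distr_on_R_conv_pow: "distr_on_R M \<Longrightarrow> distr_on_R (conv_pow M n)"
  by (induction n) (simp_all add: distr_on_R_return_0 distr_on_R_convolution)

lemma convolution_return_0:
  fixes M :: "real measure"
  assumes "finite_measure M" and [measurable_cong]: "sets M = sets borel"
  shows "(M \<star> return borel 0) = M"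
proof (rule measure_eqI)
  show "sets (M \<star> return borel 0) = sets M" using assms by simp
  fix A assume "A \<in> sets (M \<star> return borel 0)"
  then have [measurable]: "A \<in> sets borel" by simp
  have "finite_measure (return borel (0::real))"
    by (simp add: prob_space_return prob_space.finite_measure)
  then have "emeasure (M \<star> return borel 0) A = \<integral>\<^sup>+x. \<integral>\<^sup>+y. indicator A (x + y) \<partial>return borel 0 \<partial>M"
    using assms by (simp add: convolution_emeasure')
  also have "\<dots> = emeasure M A"
    by (simp add: nn_integral_return nn_integral_indicator)
  finally show "emeasure (M \<star> return borel 0) A = emeasure M A" .
qed

lemma convolution_interchange:
  fixes A B C D :: "real measure"
  assumes "finite_measure A" "finite_measure B" "finite_measure C" "finite_measure D"
    and "sets A = sets borel" "sets B = sets borel" "sets C = sets borel" "sets D = sets borel"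
  shows "((A \<star> B) \<star> (C \<star> D)) = ((A \<star> C) \<star> (B \<star> D))"
proof -
  have fin: "finite_measure (X \<star> Y)"
    if "finite_measure X" "finite_measure Y" "sets X = sets borel" "sets Y = sets borel"
    for X Y :: "real measure"
    using that by (intro convolution_finite) auto
  have "((A \<star> B) \<star> (C \<star> D)) = (A \<star> (B \<star> (C \<star> D)))"
    using assms fin[of C D] by (intro convolution_associative[symmetric]) auto
  also have "(B \<star> (C \<star> D)) = ((B \<star> C) \<star> D)"
    using assms by (intro convolution_associative) auto
  also have "(B \<star> C) = (C \<star> B)"
    using assms by (intro convolution_commutative) auto
  also have "((C \<star> B) \<star> D) = (C \<star> (B \<star> D))"
    using assms by (intro convolution_associative[symmetric]) auto
  also have "(A \<star> (C \<star> (B \<star> D))) = ((A \<star> C) \<star> (B \<star> D))"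
    using assms fin[of B D] by (intro convolution_associative) auto
  finally show ?thesis .
qed

lemma conv_pow_convolution:
  assumes "distr_on_R F" "distr_on_R M"
  shows "conv_pow (F \<star> M) n = (conv_pow F n \<star> conv_pow M n)"
proof (induction n)
  case 0
  show ?case
    using distr_on_R_return_0 by (simp add: convolution_return_0 distr_on_RD)
next
  case (Suc n)
  have "distr_on_R (conv_pow F n)" "distr_on_R (conv_pow M n)"
    using assms by (simp_all add: distr_on_R_conv_pow)
  with assms Suc show ?case
    by (simp, intro convolution_interchange) (simp_all add: distr_on_RD)
qed

lemma AE_convolution_atLeastAtMost:
  assumes "distr_on_R G" "distr_on_R H"
    and G: "AE x in G. x \<in> {0..a}" and H: "AE y in H. y \<in> {0..b}"
  shows "AE z in G \<star> H. z \<in> {0..a + b}"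
proof -
  interpret G: prob_space G using assms(1) by (rule distr_on_R_prob_space)
  interpret H: prob_space H using assms(2) by (rule distr_on_R_prob_space)
  interpret pair_prob_space G H ..
  have [measurable_cong]: "sets G = sets borel" "sets H = sets borel"
    using assms by (simp_all add: distr_on_R_sets)
  have "AE p in G \<Otimes>\<^sub>M H. fst p + snd p \<in> {0..a + b}"
  proof (rule AE_pair_measure)
    show "{p \<in> space (G \<Otimes>\<^sub>M H). fst p + snd p \<in> {0..a + b}} \<in> sets (G \<Otimes>\<^sub>M H)"
      by measurable
    show "AE x in G. AE y in H. fst (x, y) + snd (x, y) \<in> {0..a + b}"
      using G by (rule eventually_mono) (rule eventually_mono[OF H]; auto)
  qed
  then show ?thesis
    unfolding convolution_def by (subst AE_distr_iff) (auto simp: case_prod_beta)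
qed

lemma AE_conv_pow_atLeastAtMost:
  assumes F: "distr_on_R F" "AE x in F. x \<in> {0..c}"
  shows "AE x in conv_pow F n. x \<in> {0..real n * c}"
proof (induction n)
  case 0
  show ?case unfolding conv_pow.simps by (subst AE_return) auto
next
  case (Suc n)
  have "distr_on_R (conv_pow F n)"
    using F(1) by (rule distr_on_R_conv_pow)
  then have "AE x in F \<star> conv_pow F n. x \<in> {0..c + real n * c}"
    using F Suc by (intro AE_convolution_atLeastAtMost)
  then show ?case unfolding conv_pow.simps by (simp add: algebra_simps)
qed

section \<open>Tails and transforms\<close>

lemma tail_nonneg: "0 \<le> tail M x"
  by (simp add: tail_def)

lemma tail_antimono:
  fixes M :: "real measure"
  assumes "finite_measure M" "sets M = sets borel" "x \<le> y"
  shows "tail M y \<le> tail M x"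
  unfolding tail_def using assms by (intro finite_measure.finite_measure_mono) auto

lemma borel_measurable_tail:
  fixes M :: "real measure"
  assumes "finite_measure M" "sets M = sets borel"
  shows "tail M \<in> borel_measurable borel"
proof -
  have "mono (\<lambda>x. - tail M x)"
    using tail_antimono[OF assms] by (auto simp: mono_def)
  then have "(\<lambda>x. - (- tail M x)) \<in> borel_measurable borel"
    by (intro borel_measurable_uminus borel_measurable_mono)
  then show ?thesis by simp
qed

lemma integrable_tail_shift:
  fixes G H :: "real measure"
  assumes G: "finite_measure G" "sets G = sets borel" and H: "finite_measure H" "sets H = sets borel"
  shows "integrable G (\<lambda>y. tail H (x - y))"
proof -
  have "(\<lambda>y. tail H (x - y)) \<in> borel_measurable G"
    using borel_measurable_tail[OF H] by (simp add: measurable_cong_sets[OF G(2) refl])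
  then show ?thesis
    by (intro finite_measure.integrable_const_bound[OF G(1), where B="measure H (space H)"])
       (auto simp: tail_def intro!: finite_measure.bounded_measure[OF H(1)])
qed

lemma tail_convolution:
  fixes G H :: "real measure"
  assumes G: "finite_measure G" and sG: "sets G = sets borel"
    and H: "finite_measure H" and sH: "sets H = sets borel"
  shows "tail (G \<star> H) x = (\<integral>y. tail H (x - y) \<partial>G)"
proof -
  have int: "integrable G (\<lambda>y. tail H (x - y))"
    using assms by (rule integrable_tail_shift)
  have "emeasure (G \<star> H) {x<..} = \<integral>\<^sup>+y. emeasure H {a. a + y \<in> {x<..}} \<partial>G"
    using assms by (intro convolution_emeasure) (auto simp: sets_eq_imp_space_eq)
  also have "\<dots> = \<integral>\<^sup>+y. ennreal (tail H (x - y)) \<partial>G"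
    by (intro nn_integral_cong)
       (simp add: tail_def finite_measure.emeasure_eq_measure[OF H] greaterThan_def algebra_simps)
  also have "\<dots> = ennreal (\<integral>y. tail H (x - y) \<partial>G)"
    using int by (intro nn_integral_eq_integral) (simp_all add: tail_nonneg)
  finally show ?thesis
    using convolution_finite[OF G H sH sG]
    by (simp add: tail_def finite_measure.emeasure_eq_measure integral_nonneg_AE tail_nonneg)
qed

lemma
  fixes G H :: "real measure"
  assumes G: "distr_on_R G" "AE y in G. y \<in> {0..K}"
    and H: "finite_measure H" "sets H = sets borel"
  shows tail_le_tail_convolution: "tail H x \<le> tail (G \<star> H) x"
    and tail_convolution_le_tail_shift: "tail (G \<star> H) x \<le> tail H (x - K)"
proof -
  interpret G: prob_space G using G(1) by (rule distr_on_R_prob_space)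
  have sG: "sets G = sets borel" using G(1) by (rule distr_on_R_sets)
  have int: "integrable G (\<lambda>y. tail H (x - y))"
    using G.finite_measure_axioms sG H by (rule integrable_tail_shift)
  have eq: "tail (G \<star> H) x = (\<integral>y. tail H (x - y) \<partial>G)"
    using G.finite_measure_axioms sG H by (rule tail_convolution)
  have "AE y in G. tail H x \<le> tail H (x - y)"
    using G(2) by (rule eventually_mono) (auto intro: tail_antimono[OF H])
  then have "(\<integral>y. tail H x \<partial>G) \<le> (\<integral>y. tail H (x - y) \<partial>G)"
    using int by (intro integral_mono_AE) auto
  then show "tail H x \<le> tail (G \<star> H) x" by (simp add: eq G.prob_space)
  have "AE y in G. tail H (x - y) \<le> tail H (x - K)"
    using G(2) by (rule eventually_mono) (auto intro: tail_antimono[OF H])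
  then have "(\<integral>y. tail H (x - y) \<partial>G) \<le> (\<integral>y. tail H (x - K) \<partial>G)"
    using int by (intro integral_mono_AE) auto
  then show "tail (G \<star> H) x \<le> tail H (x - K)" by (simp add: eq G.prob_space)
qed

lemma mgf_hat_convolution:
  fixes G H :: "real measure"
  assumes "finite_measure G" and [measurable_cong]: "sets G = sets borel"
    and "finite_measure H" and [measurable_cong]: "sets H = sets borel"
  shows "mgf_hat (G \<star> H) g = mgf_hat G g * mgf_hat H g"
proof -
  have "mgf_hat (G \<star> H) g = (\<integral>\<^sup>+x. \<integral>\<^sup>+y. ennreal (exp (g * x)) * ennreal (exp (g * y)) \<partial>H \<partial>G)"
    unfolding mgf_hat_def using assms
    by (subst nn_integral_convolution) (auto simp: distrib_left exp_add ennreal_mult)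
  also have "\<dots> = (\<integral>\<^sup>+x. ennreal (exp (g * x)) * mgf_hat H g \<partial>G)"
    unfolding mgf_hat_def by (subst nn_integral_cmult) auto
  also have "\<dots> = mgf_hat G g * mgf_hat H g"
    unfolding mgf_hat_def by (subst nn_integral_multc) auto
  finally show ?thesis .
qed

lemma mgf_hat_neq_0:
  assumes "distr_on_R M"
  shows "mgf_hat M g \<noteq> 0"
proof
  interpret prob_space M using assms by (rule distr_on_R_prob_space)
  have [measurable_cong]: "sets M = sets borel" using assms by (rule distr_on_R_sets)
  assume "mgf_hat M g = 0"
  then have "AE x in M. ennreal (exp (g * x)) = 0"
    unfolding mgf_hat_def by (subst (asm) nn_integral_0_iff_AE) auto
  then show False by simp
qed

lemma enn2real_mgf_hat_pos:
  assumes "distr_on_R M" "mgf_hat M g < \<infinity>"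
  shows "0 < enn2real (mgf_hat M g)"
  using mgf_hat_neq_0[OF assms(1)] assms(2)
  by (simp add: enn2real_positive_iff less_top[symmetric] zero_less_iff_neq_zero)

lemma
  fixes G :: "real measure"
  assumes G: "distr_on_R G" "AE y in G. y \<in> {0..K}" and "0 \<le> g"
  shows mgf_hat_eq_integral: "mgf_hat G g = ennreal (\<integral>y. exp (g * y) \<partial>G)"
    and enn2real_mgf_hat: "enn2real (mgf_hat G g) = (\<integral>y. exp (g * y) \<partial>G)"
    and one_le_mgf_hat: "1 \<le> enn2real (mgf_hat G g)"
    and mgf_hat_le_exp: "enn2real (mgf_hat G g) \<le> exp (g * K)"
proof -
  interpret G: prob_space G using G(1) by (rule distr_on_R_prob_space)
  have [measurable_cong]: "sets G = sets borel" using G(1) by (rule distr_on_R_sets)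
  have lower: "AE y in G. 1 \<le> exp (g * y)"
    using G(2) by (rule eventually_mono) (use \<open>0 \<le> g\<close> in simp)
  have upper: "AE y in G. exp (g * y) \<le> exp (g * K)"
    using G(2) by (rule eventually_mono) (use \<open>0 \<le> g\<close> in \<open>simp add: mult_left_mono\<close>)
  have int: "integrable G (\<lambda>y. exp (g * y))"
    using upper by (intro G.integrable_const_bound[of _ "exp (g * K)"]) (auto elim!: eventually_mono)
  then show eq: "mgf_hat G g = ennreal (\<integral>y. exp (g * y) \<partial>G)"
    unfolding mgf_hat_def by (intro nn_integral_eq_integral) auto
  have "(\<integral>y. 1 \<partial>G) \<le> (\<integral>y. exp (g * y) \<partial>G)"
    using G.integrable_const int lower by (rule integral_mono_AE)
  then have "1 \<le> (\<integral>y. exp (g * y) \<partial>G)"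
    by (simp add: G.prob_space)
  then show "enn2real (mgf_hat G g) = (\<integral>y. exp (g * y) \<partial>G)" "1 \<le> enn2real (mgf_hat G g)"
    by (simp_all add: eq)
  have "(\<integral>y. exp (g * y) \<partial>G) \<le> (\<integral>y. exp (g * K) \<partial>G)"
    using int G.integrable_const upper by (rule integral_mono_AE)
  then show "enn2real (mgf_hat G g) \<le> exp (g * K)"
    using \<open>1 \<le> (\<integral>y. exp (g * y) \<partial>G)\<close> by (simp add: eq G.prob_space)
qed

lemma mgf_hat_bounded_support_less_top:
  assumes "distr_on_R G" "AE y in G. y \<in> {0..K}" "0 \<le> g"
  shows "mgf_hat G g < \<infinity>"
  using mgf_hat_eq_integral[OF assms] by simp

lemma cmgf_hat_convolution:
  fixes G H :: "real measure"
  assumes "finite_measure G" and [measurable_cong]: "sets G = sets borel"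
    and "finite_measure H" and [measurable_cong]: "sets H = sets borel"
    and "mgf_hat G g < \<infinity>" "mgf_hat H g < \<infinity>"
  shows "cmgf_hat (G \<star> H) g z = cmgf_hat G g z * cmgf_hat H g z"
proof -
  interpret G: finite_measure G by fact
  interpret H: finite_measure H by fact
  interpret pair_sigma_finite G H ..
  define e where "e x = exp (Complex g z * complex_of_real x)" for x :: real
  have [measurable]: "e \<in> borel_measurable borel"
    unfolding e_def by (intro borel_measurable_continuous_onI continuous_intros)
  have norm_e: "norm (e x) = exp (g * x)" for x
    by (simp add: e_def norm_exp_eq_Re)
  have "(\<integral>\<^sup>+p. norm (e (fst p) * e (snd p)) \<partial>(G \<Otimes>\<^sub>M H)) =
      (\<integral>\<^sup>+x. \<integral>\<^sup>+y. ennreal (exp (g * x)) * ennreal (exp (g * y)) \<partial>H \<partial>G)"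
    by (subst H.nn_integral_fst[symmetric]) (auto simp: norm_mult norm_e ennreal_mult)
  also have "\<dots> = mgf_hat G g * mgf_hat H g"
    unfolding mgf_hat_def by (simp add: nn_integral_cmult nn_integral_multc)
  finally have "integrable (G \<Otimes>\<^sub>M H) (\<lambda>p. e (fst p) * e (snd p))"
    using assms(5,6) by (intro integrableI_bounded) (auto simp: ennreal_mult_less_top)
  then have "(\<integral>p. e (fst p) * e (snd p) \<partial>(G \<Otimes>\<^sub>M H)) = (\<integral>x. \<integral>y. e x * e y \<partial>H \<partial>G)"
    by (simp add: integral_fst'[symmetric])
  moreover have "cmgf_hat (G \<star> H) g z = (\<integral>p. e (fst p) * e (snd p) \<partial>(G \<Otimes>\<^sub>M H))"
    unfolding cmgf_hat_def convolution_def e_def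
    by (subst integral_distr) (auto simp: case_prod_beta distrib_left exp_add)
  ultimately show ?thesis
    by (simp add: cmgf_hat_def e_def)
qed

section \<open>The classes L(\<gamma>) and S(\<gamma>) under convolution with distributions of small support\<close>

definition shift_exponential :: "real \<Rightarrow> (real \<Rightarrow> real) \<Rightarrow> bool" where
  "shift_exponential g f \<longleftrightarrow> (\<forall>a. (\<lambda>x. f (x + a)) \<sim>[at_top] (\<lambda>x. exp (- g * a) * f x))"

lemma class_L_altdef:
  "class_L g M \<longleftrightarrow> (\<forall>x. 0 < tail M x) \<and> shift_exponential g (tail M)"
  by (simp add: class_L_def shift_exponential_def)

lemma filterlim_add_const_at_top: "filterlim (\<lambda>x::real. x + a) at_top at_top"
  using filterlim_tendsto_add_at_top[OF tendsto_const[of a] filterlim_ident] by (simp add: add.commute)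

lemma asymp_equivD'_const:
  fixes f h :: "'a \<Rightarrow> real"
  assumes "f \<sim>[F] (\<lambda>x. c * h x)" "c \<noteq> 0" "\<forall>\<^sub>F x in F. h x \<noteq> 0"
  shows "((\<lambda>x. f x / h x) \<longlongrightarrow> c) F"
proof -
  have "((\<lambda>x. f x / (c * h x)) \<longlongrightarrow> 1) F"
    using assms by (intro asymp_equivD_strong) (auto elim!: eventually_mono)
  then have "((\<lambda>x. c * (f x / (c * h x))) \<longlongrightarrow> c * 1) F"
    by (intro tendsto_mult tendsto_const)
  then show ?thesis
    using \<open>c \<noteq> 0\<close> by simp
qed

lemma shift_exponential_iff_tendsto:
  assumes "\<forall>\<^sub>F x in at_top. f x \<noteq> 0"
  shows "shift_exponential g f \<longleftrightarrow> (\<forall>a. ((\<lambda>x. f (x + a) / f x) \<longlongrightarrow> exp (- g * a)) at_top)"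
  unfolding shift_exponential_def
proof (intro iffI allI)
  fix a assume "\<forall>a. (\<lambda>x. f (x + a)) \<sim>[at_top] (\<lambda>x. exp (- g * a) * f x)"
  then show "((\<lambda>x. f (x + a) / f x) \<longlongrightarrow> exp (- g * a)) at_top"
    using asymp_equivD'_const[OF _ _ assms] by simp
next
  fix a assume "\<forall>a. ((\<lambda>x. f (x + a) / f x) \<longlongrightarrow> exp (- g * a)) at_top"
  then show "(\<lambda>x. f (x + a)) \<sim>[at_top] (\<lambda>x. exp (- g * a) * f x)"
    by (intro asymp_equivI'_const) simp_all
qed

lemma class_L_tendsto:
  assumes "class_L g M"
  shows "((\<lambda>x. tail M (x + a) / tail M x) \<longlongrightarrow> exp (- g * a)) at_top"
proof -
  have "\<forall>\<^sub>F x in at_top. tail M x \<noteq> 0"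
    using assms by (simp add: class_L_def less_imp_neq[symmetric])
  moreover have "shift_exponential g (tail M)"
    using assms by (simp add: class_L_altdef)
  ultimately show ?thesis
    using shift_exponential_iff_tendsto by blast
qed

lemma shift_exponential_asymp_equiv:
  assumes "shift_exponential g h" "f \<sim>[at_top] (\<lambda>x. m * h x)"
  shows "shift_exponential g f"
  unfolding shift_exponential_def
proof
  fix a
  have "(\<lambda>x. f (x + a)) \<sim>[at_top] (\<lambda>x. m * h (x + a))"
    using asymp_equiv_compose'[OF assms(2) filterlim_add_const_at_top] .
  also have "\<dots> \<sim>[at_top] (\<lambda>x. m * (exp (- g * a) * h x))"
    using assms(1) unfolding shift_exponential_def by (intro asymp_equiv_intros) auto
  also have "\<dots> = (\<lambda>x. exp (- g * a) * (m * h x))"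
    by (simp add: ac_simps)
  also have "\<dots> \<sim>[at_top] (\<lambda>x. exp (- g * a) * f x)"
    using assms(2) by (intro asymp_equiv_intros) (simp add: asymp_equiv_sym)
  finally show "(\<lambda>x. f (x + a)) \<sim>[at_top] (\<lambda>x. exp (- g * a) * f x)" .
qed

text \<open>For bounded f this says l \<le> liminf f and limsup f \<le> h.\<close>

definition squeezed :: "real \<Rightarrow> real \<Rightarrow> 'a filter \<Rightarrow> ('a \<Rightarrow> real) \<Rightarrow> bool" where
  "squeezed l h F f \<longleftrightarrow> (\<exists>u v lu lv. (u \<longlongrightarrow> lu) F \<and> (v \<longlongrightarrow> lv) F \<and> l \<le> lu \<and> lv \<le> h \<and>
     (\<forall>\<^sub>F x in F. u x \<le> f x \<and> f x \<le> v x))"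

lemma squeezedI:
  assumes "(u \<longlongrightarrow> lu) F" "(v \<longlongrightarrow> lv) F" "l \<le> lu" "lv \<le> h" "\<And>x. u x \<le> f x" "\<And>x. f x \<le> v x"
  shows "squeezed l h F f"
  unfolding squeezed_def using assms
  by (intro exI[of _ u] exI[of _ v] exI[of _ lu] exI[of _ lv] conjI always_eventually allI) auto

lemma tendsto_if_squeezed_at_right_0:
  fixes lo hi :: "real \<Rightarrow> real"
  assumes lo: "(lo \<longlongrightarrow> L) (at_right 0)" and hi: "(hi \<longlongrightarrow> L) (at_right 0)"
    and squeezed: "\<And>K. K > 0 \<Longrightarrow> squeezed (lo K) (hi K) F f"
  shows "(f \<longlongrightarrow> L) F"
proof (rule order_tendstoI)
  fix a assume "a < L"
  have "\<forall>\<^sub>F K in at_right 0. 0 < K \<and> a < lo K"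
    by (intro eventually_conj eventually_at_right_less order_tendstoD(1)[OF lo \<open>a < L\<close>])
  then obtain K where "0 < K" "a < lo K"
    using eventually_happens'[OF trivial_limit_at_right_real] by blast
  then obtain u v lu where u: "(u \<longlongrightarrow> lu) F" "lo K \<le> lu" "\<forall>\<^sub>F x in F. u x \<le> f x \<and> f x \<le> v x"
    using squeezed[OF \<open>0 < K\<close>] unfolding squeezed_def by blast
  have "\<forall>\<^sub>F x in F. a < u x"
    using u(1) by (rule order_tendstoD) (use u(2) \<open>a < lo K\<close> in linarith)
  with u(3) show "\<forall>\<^sub>F x in F. a < f x" by eventually_elim auto
next
  fix a assume "L < a"
  have "\<forall>\<^sub>F K in at_right 0. 0 < K \<and> hi K < a"
    by (intro eventually_conj eventually_at_right_less order_tendstoD(2)[OF hi \<open>L < a\<close>])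
  then obtain K where "0 < K" "hi K < a"
    using eventually_happens'[OF trivial_limit_at_right_real] by blast
  then obtain u v lv where v: "(v \<longlongrightarrow> lv) F" "lv \<le> hi K" "\<forall>\<^sub>F x in F. u x \<le> f x \<and> f x \<le> v x"
    using squeezed[OF \<open>0 < K\<close>] unfolding squeezed_def by blast
  have "\<forall>\<^sub>F x in F. v x < a"
    using v(1) by (rule order_tendstoD) (use v(2) \<open>hi K < a\<close> in linarith)
  with v(3) show "\<forall>\<^sub>F x in F. f x < a" by eventually_elim auto
qed

text \<open>
  The dominating function is the constant 2 exp(\<gamma>K): the ratio of the tails of P at t - K and
  at t tends to exp(\<gamma>K).
\<close>

lemma tail_convolution_asymp_equiv:
  fixes G P :: "real measure"
  assumes G: "distr_on_R G" "AE y in G. y \<in> {0..K}" and "0 \<le> g"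
    and P: "distr_on_R P" "\<forall>\<^sub>F x in at_top. 0 < tail P x" "shift_exponential g (tail P)"
  shows "tail (G \<star> P) \<sim>[at_top] (\<lambda>x. enn2real (mgf_hat G g) * tail P x)"
proof -
  interpret G: prob_space G using G(1) by (rule distr_on_R_prob_space)
  have sG [measurable_cong]: "sets G = sets borel" using G(1) by (rule distr_on_R_sets)
  note fP = distr_on_RD[OF P(1)]
  have ratio: "((\<lambda>t. tail P (t + a) / tail P t) \<longlongrightarrow> exp (- g * a)) at_top" for a
    using P(2,3) by (simp add: shift_exponential_iff_tendsto eventually_mono)
  define s where "s t y = tail P (t - y) / tail P t" for t y
  have [measurable]: "s t \<in> borel_measurable borel" for t
    unfolding s_def using borel_measurable_tail[OF fP] by measurable
  have "\<forall>\<^sub>F t in at_top. tail P (t - K) / tail P t < 2 * exp (g * K)"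
    using ratio[of "- K"] by (intro order_tendstoD(2)) auto
  then have bound: "\<forall>\<^sub>F t in at_top. AE y in G. norm (s t y) \<le> 2 * exp (g * K)"
    using P(2)
  proof eventually_elim
    case (elim t)
    show ?case
      using G(2)
    proof eventually_elim
      case (elim y)
      have "tail P (t - y) \<le> tail P (t - K)"
        using elim by (intro tail_antimono[OF fP]) auto
      then have "s t y \<le> tail P (t - K) / tail P t"
        unfolding s_def using \<open>0 < tail P t\<close> by (intro divide_right_mono) auto
      then show ?case
        using \<open>tail P (t - K) / tail P t < 2 * exp (g * K)\<close> by (simp add: s_def tail_nonneg)
    qed
  qed
  have "AE y in G. ((\<lambda>t. s t y) \<longlongrightarrow> exp (g * y)) at_top"
    using ratio[of "- y" for y] by (simp add: s_def)
  then have "((\<lambda>t. \<integral>y. s t y \<partial>G) \<longlongrightarrow> (\<integral>y. exp (g * y) \<partial>G)) at_top"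
    by (intro integral_dominated_convergence_at_top[OF _ _ _ _ bound]) auto
  moreover have "(\<integral>y. s t y \<partial>G) = tail (G \<star> P) t / tail P t" for t
    by (simp add: s_def tail_convolution[OF G.finite_measure_axioms sG fP])
  ultimately have "((\<lambda>t. tail (G \<star> P) t / tail P t) \<longlongrightarrow> enn2real (mgf_hat G g)) at_top"
    by (simp add: enn2real_mgf_hat[OF G \<open>0 \<le> g\<close>])
  then show ?thesis
    using one_le_mgf_hat[OF G \<open>0 \<le> g\<close>] by (intro asymp_equivI'_const) auto
qed

text \<open>The square of G \<star> H is regrouped as G^{2*} \<star> H^{2*}, to which the tail asymptotics apply again.\<close>

lemma class_S_convolution:
  fixes G H :: "real measure"
  assumes G: "distr_on_R G" "AE y in G. y \<in> {0..K}" and H: "distr_on_R H"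
    and "0 \<le> g" and "class_S g H"
  shows "class_S g (G \<star> H)"
proof -
  let ?m = "\<lambda>M. enn2real (mgf_hat M g)"
  from \<open>class_S g H\<close> have posH: "\<forall>x. 0 < tail H x" and LH: "shift_exponential g (tail H)"
    and mH: "mgf_hat H g < \<infinity>" and SH: "tail (H \<star> H) \<sim>[at_top] (\<lambda>x. (2 * ?m H) * tail H x)"
    by (simp_all add: class_S_def class_L_altdef)
  have mG: "mgf_hat G g < \<infinity>"
    by (rule mgf_hat_bounded_support_less_top[OF G \<open>0 \<le> g\<close>])
  have mGH: "mgf_hat (G \<star> H) g = mgf_hat G g * mgf_hat H g"
    using distr_on_RD[OF G(1)] distr_on_RD[OF H] by (intro mgf_hat_convolution) auto
  have T: "tail (G \<star> H) \<sim>[at_top] (\<lambda>x. ?m G * tail H x)"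
    using posH LH by (intro tail_convolution_asymp_equiv[OF G \<open>0 \<le> g\<close> H]) auto
  have posT: "\<forall>x. 0 < tail (G \<star> H) x"
    using posH tail_le_tail_convolution[OF G distr_on_RD[OF H]] by (meson less_le_trans)
  have GG: "distr_on_R (G \<star> G)" "AE y in G \<star> G. y \<in> {0..K + K}"
    using distr_on_R_convolution[OF G(1) G(1)] AE_convolution_atLeastAtMost[OF G(1) G(1) G(2) G(2)] by simp_all
  have "0 < ?m H" using H mH by (rule enn2real_mgf_hat_pos)
  then have HH: "\<forall>\<^sub>F x in at_top. 0 < tail (H \<star> H) x" "shift_exponential g (tail (H \<star> H))"
    using asymp_equiv_eventually_pos_iff[OF SH] posH shift_exponential_asymp_equiv[OF LH SH]
    by (auto elim!: eventually_mono)
  have "tail ((G \<star> G) \<star> (H \<star> H)) \<sim>[at_top] (\<lambda>x. ?m (G \<star> G) * tail (H \<star> H) x)"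
    using GG \<open>0 \<le> g\<close> distr_on_R_convolution[OF H H] HH by (rule tail_convolution_asymp_equiv)
  also have "\<dots> \<sim>[at_top] (\<lambda>x. ?m (G \<star> G) * ((2 * ?m H) * tail H x))"
    using SH by (intro asymp_equiv_intros)
  also have "\<dots> = (\<lambda>x. (2 * ?m (G \<star> H)) * (?m G * tail H x))"
    using distr_on_RD[OF G(1)] distr_on_RD[OF H] by (simp add: mGH mgf_hat_convolution enn2real_mult ac_simps)
  also have "\<dots> \<sim>[at_top] (\<lambda>x. (2 * ?m (G \<star> H)) * tail (G \<star> H) x)"
    using T by (intro asymp_equiv_intros) (simp add: asymp_equiv_sym)
  finally show ?thesis
    using posT shift_exponential_asymp_equiv[OF LH T] mG mH distr_on_RD[OF G(1)] distr_on_RD[OF H]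
    by (simp add: class_S_def class_L_altdef mGH ennreal_mult_less_top convolution_interchange)
qed

lemma tail_ratio_squeezed:
  fixes G H :: "real measure"
  assumes G: "distr_on_R G" "AE y in G. y \<in> {0..K}"
    and H: "distr_on_R H" "\<forall>x. 0 < tail H x" and "class_L g (G \<star> H)"
  shows "squeezed (exp (- g * (a + K))) (exp (- g * (a - K))) at_top (\<lambda>x. tail H (x + a) / tail H x)"
proof -
  let ?T = "tail (G \<star> H)"
  have posT: "0 < ?T x" for x
    using \<open>class_L g (G \<star> H)\<close> by (simp add: class_L_def)
  show ?thesis
  proof (rule squeezedI)
    show "((\<lambda>x. ?T (x + (a + K)) / ?T x) \<longlongrightarrow> exp (- g * (a + K))) at_top"
      using \<open>class_L g (G \<star> H)\<close> by (rule class_L_tendsto)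
    show "((\<lambda>x. ?T (x + a) / ?T (x + K)) \<longlongrightarrow> exp (- g * (a - K))) at_top"
      using filterlim_compose[OF class_L_tendsto[OF \<open>class_L g (G \<star> H)\<close>, of "a - K"]
          filterlim_add_const_at_top[of K]]
      by (simp add: algebra_simps)
    show "?T (x + (a + K)) / ?T x \<le> tail H (x + a) / tail H x" for x
      using tail_convolution_le_tail_shift[OF G distr_on_RD[OF H(1)], of "x + (a + K)"]
        tail_le_tail_convolution[OF G distr_on_RD[OF H(1)], of x] H(2) posT
      by (intro frac_le) (auto simp: tail_nonneg add.assoc)
    show "tail H (x + a) / tail H x \<le> ?T (x + a) / ?T (x + K)" for x
      using tail_le_tail_convolution[OF G distr_on_RD[OF H(1)], of "x + a"]
        tail_convolution_le_tail_shift[OF G distr_on_RD[OF H(1)], of "x + K"] H(2) posT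
      by (intro frac_le) (auto simp: tail_nonneg)
  qed simp_all
qed

lemma class_L_if_small_perturbations:
  fixes H :: "real measure"
  assumes H: "distr_on_R H"
    and perturb: "\<And>K. K > 0 \<Longrightarrow> \<exists>G. distr_on_R G \<and> (AE y in G. y \<in> {0..K}) \<and> class_L g (G \<star> H)"
  shows "class_L g H"
proof -
  have pos: "0 < tail H x" for x
  proof -
    obtain G where G: "distr_on_R G" "AE y in G. y \<in> {0..1}" "class_L g (G \<star> H)"
      using perturb[of 1] by auto
    have "0 < tail (G \<star> H) (x + 1)" using G(3) by (simp add: class_L_def)
    also have "\<dots> \<le> tail H x"
      using tail_convolution_le_tail_shift[OF G(1,2) distr_on_RD[OF H], of "x + 1"] by simp
    finally show ?thesis .
  qed
  have "((\<lambda>x. tail H (x + a) / tail H x) \<longlongrightarrow> exp (- g * a)) at_top" for a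
  proof (rule tendsto_if_squeezed_at_right_0)
    show "((\<lambda>K. exp (- g * (a + K))) \<longlongrightarrow> exp (- g * a)) (at_right 0)"
      "((\<lambda>K. exp (- g * (a - K))) \<longlongrightarrow> exp (- g * a)) (at_right 0)"
      by (auto intro!: tendsto_eq_intros)
    fix K :: real assume "K > 0"
    then obtain G where G: "distr_on_R G" "AE y in G. y \<in> {0..K}" and L: "class_L g (G \<star> H)"
      using perturb by blast
    show "squeezed (exp (- g * (a + K))) (exp (- g * (a - K))) at_top (\<lambda>x. tail H (x + a) / tail H x)"
      using pos by (intro tail_ratio_squeezed[OF G H _ L]) simp
  qed
  then show ?thesis
    using pos by (simp add: class_L_altdef shift_exponential_iff_tendsto less_imp_neq[symmetric])
qed

lemma
  fixes G H :: "real measure"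
  assumes G: "distr_on_R G" "AE y in G. y \<in> {0..K}" and H: "distr_on_R H" "\<forall>x. 0 < tail H x"
    and T: "\<forall>x. 0 < tail (G \<star> H) x"
  shows tail_square_ratio_lower:
      "tail ((G \<star> G) \<star> (H \<star> H)) (x + 2 * K) / tail (G \<star> H) x \<le> tail (H \<star> H) x / tail H x"
    and tail_square_ratio_upper:
      "tail (H \<star> H) x / tail H x \<le> tail ((G \<star> G) \<star> (H \<star> H)) x / tail (G \<star> H) (x + K)"
proof -
  have GG: "distr_on_R (G \<star> G)" "AE y in G \<star> G. y \<in> {0..K + K}"
    using distr_on_R_convolution[OF G(1) G(1)] AE_convolution_atLeastAtMost[OF G(1) G(1) G(2) G(2)] by simp_all
  note HH = distr_on_RD[OF distr_on_R_convolution[OF H(1) H(1)]]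
  show "tail ((G \<star> G) \<star> (H \<star> H)) (x + 2 * K) / tail (G \<star> H) x \<le> tail (H \<star> H) x / tail H x"
    using tail_convolution_le_tail_shift[OF GG HH, of "x + 2 * K"]
      tail_le_tail_convolution[OF G distr_on_RD[OF H(1)], of x] H(2)
    by (intro frac_le) (auto simp: tail_nonneg)
  show "tail (H \<star> H) x / tail H x \<le> tail ((G \<star> G) \<star> (H \<star> H)) x / tail (G \<star> H) (x + K)"
    using tail_le_tail_convolution[OF GG HH, of x]
      tail_convolution_le_tail_shift[OF G distr_on_RD[OF H(1)], of "x + K"] T
    by (intro frac_le) (auto simp: tail_nonneg)
qed

text \<open>
  With Q the tail of (G \<star> H)^{2*} = G^{2*} \<star> H^{2*} and T the tail of G \<star> H, the ratio of the
  tails of H^{2*} and H lies between Q(x + 2K)/T(x) and Q(x)/T(x + K), whose limits are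
  c exp(-2\<gamma>K) and c exp(\<gamma>K) with c = 2 mgf_hat (G \<star> H) \<gamma> = mgf_hat G \<gamma> * L, and
  1 \<le> mgf_hat G \<gamma> \<le> exp(\<gamma>K).
\<close>

lemma tail_square_ratio_squeezed:
  fixes G H :: "real measure" and g :: real
  defines "L \<equiv> 2 * enn2real (mgf_hat H g)"
  assumes G: "distr_on_R G" "AE y in G. y \<in> {0..K}" and "0 \<le> g"
    and H: "distr_on_R H" "\<forall>x. 0 < tail H x" and S: "class_S g (G \<star> H)"
  shows "squeezed (L * exp (- (2 * g * K))) (L * exp (2 * g * K)) at_top
    (\<lambda>x. tail (H \<star> H) x / tail H x)"
proof -
  let ?m = "\<lambda>M. enn2real (mgf_hat M g)"
  let ?T = "tail (G \<star> H)" and ?Q = "tail ((G \<star> G) \<star> (H \<star> H))"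
  define c where "c = 2 * ?m (G \<star> H)"
  have LT: "class_L g (G \<star> H)" using S by (simp add: class_S_def)
  have posT: "0 < ?T x" for x using LT by (simp add: class_L_def)
  have c: "c = ?m G * L"
    using distr_on_RD[OF G(1)] distr_on_RD[OF H(1)] by (simp add: c_def L_def mgf_hat_convolution enn2real_mult)
  have "0 < c"
    using enn2real_mgf_hat_pos[OF distr_on_R_convolution[OF G(1) H(1)]] S by (simp add: c_def class_S_def)
  have mG: "1 \<le> ?m G" "?m G \<le> exp (g * K)"
    using one_le_mgf_hat[OF G \<open>0 \<le> g\<close>] mgf_hat_le_exp[OF G \<open>0 \<le> g\<close>] by simp_all
  have "?Q \<sim>[at_top] (\<lambda>x. c * ?T x)"
    using S distr_on_RD[OF G(1)] distr_on_RD[OF H(1)] by (simp add: class_S_def c_def convolution_interchange)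
  then have Q: "((\<lambda>x. ?Q x / ?T x) \<longlongrightarrow> c) at_top"
    using \<open>0 < c\<close> posT by (intro asymp_equivD'_const) (auto simp: less_imp_neq[symmetric])
  show ?thesis
  proof (rule squeezedI)
    have "((\<lambda>x. ?Q (x + 2 * K) / ?T (x + 2 * K) * (?T (x + 2 * K) / ?T x))
        \<longlongrightarrow> c * exp (- g * (2 * K))) at_top"
      using filterlim_compose[OF Q filterlim_add_const_at_top[of "2 * K"]]
      by (intro tendsto_mult class_L_tendsto[OF LT]) (simp add: o_def)
    then show "((\<lambda>x. ?Q (x + 2 * K) / ?T x) \<longlongrightarrow> c * exp (- g * (2 * K))) at_top"
      using posT by (simp add: less_imp_neq[symmetric])
    have "((\<lambda>x. (?Q x / ?T x) / (?T (x + K) / ?T x)) \<longlongrightarrow> c / exp (- g * K)) at_top"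
      by (intro tendsto_divide Q class_L_tendsto[OF LT]) simp
    then show "((\<lambda>x. ?Q x / ?T (x + K)) \<longlongrightarrow> c / exp (- g * K)) at_top"
      using posT by (simp add: less_imp_neq[symmetric])
    show "L * exp (- (2 * g * K)) \<le> c * exp (- g * (2 * K))"
      using c mG \<open>0 < c\<close> by (simp add: algebra_simps zero_less_mult_iff)
    have "c / exp (- g * K) = ?m G * L * exp (g * K)"
      by (simp add: c exp_minus field_simps)
    also have "\<dots> \<le> exp (g * K) * L * exp (g * K)"
      using mG c \<open>0 < c\<close> by (intro mult_right_mono) (auto simp: zero_less_mult_iff)
    also have "\<dots> = L * exp (2 * g * K)"
      by (simp add: exp_add[symmetric] algebra_simps)
    finally show "c / exp (- g * K) \<le> L * exp (2 * g * K)" .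
  qed (use tail_square_ratio_lower[OF G H] tail_square_ratio_upper[OF G H] posT in auto)
qed

lemma class_S_if_small_perturbations:
  fixes H :: "real measure"
  assumes H: "distr_on_R H" and "0 \<le> g"
    and perturb: "\<And>K. K > 0 \<Longrightarrow> \<exists>G. distr_on_R G \<and> (AE y in G. y \<in> {0..K}) \<and> class_S g (G \<star> H)"
  shows "class_S g H"
proof -
  define L where "L = 2 * enn2real (mgf_hat H g)"
  have LH: "class_L g H"
    using H perturb by (intro class_L_if_small_perturbations) (auto simp: class_S_def)
  then have posH: "\<forall>x. 0 < tail H x"
    by (simp add: class_L_def)
  obtain G1 where G1: "distr_on_R G1" "class_S g (G1 \<star> H)"
    using perturb[of 1] by auto
  then have "mgf_hat G1 g * mgf_hat H g < \<infinity>"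
    using distr_on_RD[OF G1(1)] distr_on_RD[OF H] by (simp add: class_S_def mgf_hat_convolution)
  then have mH: "mgf_hat H g < \<infinity>"
    using mgf_hat_neq_0[OF G1(1)] by (auto simp: ennreal_mult_less_top less_top)
  have "((\<lambda>x. tail (H \<star> H) x / tail H x) \<longlongrightarrow> L) at_top"
  proof (rule tendsto_if_squeezed_at_right_0)
    show "((\<lambda>K. L * exp (- (2 * g * K))) \<longlongrightarrow> L) (at_right 0)"
      "((\<lambda>K. L * exp (2 * g * K)) \<longlongrightarrow> L) (at_right 0)"
      by (auto intro!: tendsto_eq_intros)
    fix K :: real assume "K > 0"
    then obtain G where G: "distr_on_R G" "AE y in G. y \<in> {0..K}" and S: "class_S g (G \<star> H)"
      using perturb by blast
    show "squeezed (L * exp (- (2 * g * K))) (L * exp (2 * g * K)) at_top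
        (\<lambda>x. tail (H \<star> H) x / tail H x)"
      unfolding L_def by (rule tail_square_ratio_squeezed[OF G \<open>0 \<le> g\<close> H posH S])
  qed
  then have "tail (H \<star> H) \<sim>[at_top] (\<lambda>x. L * tail H x)"
    using enn2real_mgf_hat_pos[OF H mH] by (intro asymp_equivI'_const) (auto simp: L_def)
  then show ?thesis
    using LH mH by (simp add: class_S_def L_def)
qed

lemma not_class_L_return_0: "\<not> class_L g (return borel (0::real))"
proof -
  have "tail (return borel (0::real)) 0 = 0"
    by (simp add: tail_def measure_return)
  then show ?thesis by (auto simp: class_L_def intro: exI[of _ 0])
qed

section \<open>The smoothing density\<close>

abbreviation distr_f_c :: "real \<Rightarrow> real \<Rightarrow> real measure" where
  "distr_f_c g c \<equiv> density lborel (\<lambda>x. ennreal (f_c g c x))"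

lemma has_integral_exp_linear_weight:
  fixes w :: "'a::{real_normed_field, banach}" and c :: real
  assumes "w \<noteq> 0" "c > 0"
  shows "((\<lambda>x. exp (w * of_real x) * (1 - of_real x / of_real c)) has_integral
           ((exp (w * of_real c) - 1 - of_real c * w) / (of_real c * w\<^sup>2))) {0..c}"
proof -
  define P where "P t = exp (w * t) * ((1 - t / of_real c) / w + 1 / (of_real c * w\<^sup>2))" for t
  have "((\<lambda>x. P (of_real x)) has_vector_derivative exp (w * of_real x) * (1 - of_real x / of_real c))
      (at x within {0..c})" for x
  proof -
    have "(P has_field_derivative exp (w * of_real x) * (1 - of_real x / of_real c)) (at (of_real x))"
      unfolding P_def using assms
      by (auto intro!: derivative_eq_intros simp: field_simps power2_eq_square)
    then show ?thesis by (rule has_vector_derivative_real_field)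
  qed
  then have "((\<lambda>x. exp (w * of_real x) * (1 - of_real x / of_real c)) has_integral
      (P (of_real c) - P (of_real 0))) {0..c}"
    using assms by (intro fundamental_theorem_of_calculus) auto
  moreover have "of_real c \<noteq> (0::'a)"
    using assms by simp
  then have "P (of_real c) - P (of_real 0) = (exp (w * of_real c) - 1 - of_real c * w) / (of_real c * w\<^sup>2)"
    unfolding P_def using assms by (simp add: field_simps power2_eq_square)
  ultimately show ?thesis by simp
qed

lemma c_one_pos:
  assumes "g > 0" "c > 0"
  shows "0 < c_one g c"
proof -
  have "set_integrable lborel {0..c} (\<lambda>x. exp (- g * x) * (1 - x / c))"
    unfolding set_integrable_def using assms
    by (intro borel_integrable_compact) (auto intro!: continuous_intros)
  then have "c_one g c = integral {0..c} (\<lambda>x. exp (- g * x) * (1 - x / c))"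
    unfolding c_one_def by (rule set_borel_integral_eq_integral)
  also have "\<dots> = (exp (- g * c) - 1 + c * g) / (c * g\<^sup>2)"
    using has_integral_exp_linear_weight[of "- g" c] assms by (intro integral_unique) simp
  finally have "c_one g c = (exp (- (c * g)) - (1 - c * g)) / (c * g\<^sup>2)"
    by (simp add: algebra_simps)
  moreover have "1 - c * g < exp (- (c * g))"
    using exp_minus_greater[of "c * g"] assms by simp
  ultimately show ?thesis
    using assms by simp
qed

lemma f_c_altdef:
  assumes "c > 0"
  shows "f_c g c x = indicator {0..c} x * (exp (- g * x) * (1 - x / c)) / c_one g c"
  using assms by (cases "x = c") (auto simp: f_c_def indicator_def)

lemma f_c_nonneg:
  assumes "g > 0" "c > 0"
  shows "0 \<le> f_c g c x"
  using c_one_pos[OF assms] assms by (auto simp: f_c_def indicator_def)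

lemma borel_measurable_f_c [measurable]: "f_c g c \<in> borel_measurable borel"
  unfolding f_c_def by measurable

lemma
  assumes "g > 0" "c > 0"
  shows distr_on_R_distr_f_c: "distr_on_R (distr_f_c g c)"
    and AE_distr_f_c: "AE x in distr_f_c g c. x \<in> {0..c}"
proof -
  have "integrable lborel (\<lambda>x. indicator {0..c} x *\<^sub>R (exp (- g * x) * (1 - x / c)))"
    using assms by (intro borel_integrable_compact) (auto intro!: continuous_intros)
  moreover have "f_c g c = (\<lambda>x. indicator {0..c} x *\<^sub>R (exp (- g * x) * (1 - x / c)) / c_one g c)"
    by (simp add: f_c_altdef[OF assms(2)] fun_eq_iff)
  ultimately have "integrable lborel (f_c g c)"
    by (simp add: integrable_divide_zero)
  moreover have "(\<integral>x. f_c g c x \<partial>lborel) = 1"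
    using c_one_pos[OF assms] by (simp add: f_c_altdef[OF assms(2)] c_one_def set_lebesgue_integral_def)
  ultimately have "emeasure (distr_f_c g c) UNIV = 1"
    using f_c_nonneg[OF assms] by (simp add: emeasure_density nn_integral_eq_integral)
  then show "distr_on_R (distr_f_c g c)"
    by (simp add: distr_on_R_def prob_spaceI)
  have "AE x in lborel. ennreal (f_c g c x) \<noteq> 0 \<longrightarrow> x \<in> {0..c}"
    by (intro AE_I2) (auto simp: f_c_def indicator_def)
  then show "AE x in distr_f_c g c. x \<in> {0..c}"
    by (subst AE_density) auto
qed

lemma cmgf_hat_0: "cmgf_hat M g 0 = of_real (\<integral>x. exp (g * x) \<partial>M)"
proof -
  have "exp (Complex g 0 * complex_of_real x) = complex_of_real (exp (g * x))" for x
  proof -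
    have "Complex g 0 * complex_of_real x = complex_of_real (g * x)"
      by (simp add: complex_eq_iff)
    then show ?thesis by (simp only: exp_of_real)
  qed
  then show ?thesis
    unfolding cmgf_hat_def by (simp only: integral_complex_of_real)
qed

lemma cmgf_hat_distr_f_c:
  assumes "g > 0" "c > 0"
  shows "cmgf_hat (distr_f_c g c) g z =
    integral {0..c} (\<lambda>x. exp (Complex 0 z * of_real x) * (1 - of_real x / of_real c)) / of_real (c_one g c)"
    (is "_ = integral {0..c} ?\<phi> / _")
proof -
  have integrand: "f_c g c x *\<^sub>R exp (Complex g z * of_real x) = indicator {0..c} x *\<^sub>R ?\<phi> x / of_real (c_one g c)"
    for x
  proof -
    have "Complex g z * of_real x = of_real (g * x) + Complex 0 z * of_real x"
      by (simp add: complex_eq_iff)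
    then have "exp (Complex g z * of_real x) = of_real (exp (g * x)) * exp (Complex 0 z * of_real x)"
      by (simp only: exp_add exp_of_real)
    then have "f_c g c x *\<^sub>R exp (Complex g z * of_real x) =
        of_real (f_c g c x * exp (g * x)) * exp (Complex 0 z * of_real x)"
      by (simp add: scaleR_conv_of_real mult.assoc)
    also have "f_c g c x * exp (g * x) = indicator {0..c} x * (1 - x / c) / c_one g c"
      by (simp add: f_c_altdef[OF assms(2)] exp_minus)
    finally show ?thesis
      using assms by (simp add: scaleR_conv_of_real)
  qed
  have "set_integrable lborel {0..c} ?\<phi>"
    unfolding set_integrable_def using assms
    by (intro borel_integrable_compact) (auto intro!: continuous_intros)
  then have "(\<integral>x. indicator {0..c} x *\<^sub>R ?\<phi> x \<partial>lborel) = integral {0..c} ?\<phi>"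
    using set_borel_integral_eq_integral(2) by (simp add: set_lebesgue_integral_def)
  then show ?thesis
    unfolding cmgf_hat_def using f_c_nonneg[OF assms]
    by (subst integral_density) (simp_all add: integrand)
qed

text \<open>With w = iz the integral is (exp(wc) - 1 - cw)/(c w^2), and |exp(wc)| = 1 < |1 + cw|.\<close>

lemma integral_exp_linear_weight_neq_0:
  assumes "z \<noteq> 0" "c > 0"
  shows "integral {0..c} (\<lambda>x. exp (Complex 0 z * of_real x) * (1 - of_real x / of_real c)) \<noteq> 0"
proof -
  define w where "w = Complex 0 z"
  have "w \<noteq> 0" using assms(1) by (simp add: w_def complex_eq_iff)
  have "exp (w * of_real c) \<noteq> 1 + of_real c * w"
  proof
    assume "exp (w * of_real c) = 1 + of_real c * w"
    moreover have "norm (exp (w * of_real c)) = 1"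
      by (simp add: w_def norm_exp_eq_Re)
    moreover have "norm (1 + of_real c * w) = sqrt (1 + (c * z)\<^sup>2)"
      by (simp add: w_def cmod_def power2_eq_square)
    moreover have "1 < sqrt (1 + (c * z)\<^sup>2)"
      using assms by simp
    ultimately show False by simp
  qed
  then have "exp (w * of_real c) - 1 - of_real c * w \<noteq> 0"
    by (simp add: algebra_simps)
  then show ?thesis
    using integral_unique[OF has_integral_exp_linear_weight[OF \<open>w \<noteq> 0\<close> assms(2)]] \<open>w \<noteq> 0\<close> assms(2)
    by (simp add: w_def)
qed

lemma cmgf_hat_distr_f_c_neq_0:
  assumes "g > 0" "c > 0"
  shows "cmgf_hat (distr_f_c g c) g z \<noteq> 0"
proof (cases "z = 0")
  case True
  have "1 \<le> (\<integral>x. exp (g * x) \<partial>distr_f_c g c)"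
    using one_le_mgf_hat[OF distr_on_R_distr_f_c[OF assms] AE_distr_f_c[OF assms], of g] assms
    by (simp add: enn2real_mgf_hat[OF distr_on_R_distr_f_c[OF assms] AE_distr_f_c[OF assms]])
  then have "(\<integral>x. exp (g * x) \<partial>distr_f_c g c) \<noteq> 0"
    by linarith
  then show ?thesis
    using True by (simp add: cmgf_hat_0)
next
  case False
  then show ?thesis
    using integral_exp_linear_weight_neq_0[OF False assms(2)] c_one_pos[OF assms]
    by (simp add: cmgf_hat_distr_f_c[OF assms])
qed

definition transform_nonvanishing :: "real \<Rightarrow> real measure \<Rightarrow> bool" where
  "transform_nonvanishing g M \<longleftrightarrow> mgf_hat M g < \<infinity> \<and> (\<forall>z. cmgf_hat M g z \<noteq> 0)"

lemma transform_nonvanishing_convolution_iff: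
  assumes G: "distr_on_R G" "transform_nonvanishing g G" and H: "distr_on_R H"
  shows "transform_nonvanishing g (G \<star> H) \<longleftrightarrow> transform_nonvanishing g H"
proof -
  have mG: "mgf_hat G g < \<infinity>" "mgf_hat G g \<noteq> 0"
    using G by (simp_all add: transform_nonvanishing_def mgf_hat_neq_0)
  have "mgf_hat (G \<star> H) g < \<infinity> \<longleftrightarrow> mgf_hat H g < \<infinity>"
    using mG distr_on_RD[OF G(1)] distr_on_RD[OF H] by (auto simp: mgf_hat_convolution ennreal_mult_less_top less_top)
  moreover have "cmgf_hat (G \<star> H) g z = cmgf_hat G g z * cmgf_hat H g z" if "mgf_hat H g < \<infinity>" for z
    using mG that distr_on_RD[OF G(1)] distr_on_RD[OF H] by (intro cmgf_hat_convolution) auto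
  ultimately show ?thesis
    using G(2) by (auto simp: transform_nonvanishing_def)
qed

lemma transform_nonvanishing_distr_f_c:
  assumes "g > 0" "c > 0"
  shows "transform_nonvanishing g (distr_f_c g c)"
  using mgf_hat_bounded_support_less_top[OF distr_on_R_distr_f_c[OF assms] AE_distr_f_c[OF assms]]
    cmgf_hat_distr_f_c_neq_0[OF assms] assms
  by (simp add: transform_nonvanishing_def)

lemma class_S_conv_pow_iff_mu_c:
  assumes "g > 0" and \<mu>: "distr_on_R \<mu>"
  shows "class_S g (conv_pow \<mu> n) \<longleftrightarrow> (\<forall>c>0. class_S g (conv_pow (mu_c g c \<mu>) n))"
proof (cases "n = 0")
  case True
  then show ?thesis
    using not_class_L_return_0 by (auto simp: class_S_def intro: exI[of _ 1])
next
  case False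
  define H where "H = conv_pow \<mu> n"
  have H: "distr_on_R H" using \<mu> by (simp add: H_def distr_on_R_conv_pow)
  have F: "distr_on_R (conv_pow (distr_f_c g c) n)" "AE x in conv_pow (distr_f_c g c) n. x \<in> {0..real n * c}"
    and decomp: "conv_pow (mu_c g c \<mu>) n = (conv_pow (distr_f_c g c) n \<star> H)"
    if "c > 0" for c
    using distr_on_R_conv_pow[OF distr_on_R_distr_f_c[OF \<open>g > 0\<close> that]]
      AE_conv_pow_atLeastAtMost[OF distr_on_R_distr_f_c[OF \<open>g > 0\<close> that] AE_distr_f_c[OF \<open>g > 0\<close> that]]
      conv_pow_convolution[OF distr_on_R_distr_f_c[OF \<open>g > 0\<close> that] \<mu>]
    by (simp_all add: mu_c_def H_def)
  have "class_S g H \<longleftrightarrow> (\<forall>c>0. class_S g (conv_pow (distr_f_c g c) n \<star> H))"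
  proof
    show "class_S g H \<Longrightarrow> \<forall>c>0. class_S g (conv_pow (distr_f_c g c) n \<star> H)"
      using class_S_convolution[OF F(1,2) H] \<open>g > 0\<close> by simp
    assume "\<forall>c>0. class_S g (conv_pow (distr_f_c g c) n \<star> H)"
    then show "class_S g H"
      using H \<open>g > 0\<close>
    proof (intro class_S_if_small_perturbations)
      fix K :: real assume "K > 0"
      then have "K / real n > 0" "real n * (K / real n) = K" using False by simp_all
      then show "\<exists>G. distr_on_R G \<and> (AE y in G. y \<in> {0..K}) \<and> class_S g (G \<star> H)"
        using F \<open>\<forall>c>0. _\<close> by metis
    qed auto
  qed
  then show ?thesis by (simp add: H_def decomp)
qed

theorem lemma5p2:
  fixes \<gamma> :: real and \<mu> :: "real measure"
  assumes "\<gamma> > 0" and "distr_on_R \<mu>" and "\<forall>x. tail \<mu> x > 0"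
  shows "(\<forall>c>0. (mgf_hat \<mu> \<gamma> < \<infinity> \<and> (\<forall>z. cmgf_hat \<mu> \<gamma> z \<noteq> 0)) \<longleftrightarrow>
              (mgf_hat (mu_c \<gamma> c \<mu>) \<gamma> < \<infinity> \<and> (\<forall>z. cmgf_hat (mu_c \<gamma> c \<mu>) \<gamma> z \<noteq> 0)))
       \<and> (\<forall>n::nat. class_S \<gamma> (conv_pow \<mu> n) \<longleftrightarrow> (\<forall>c>0. class_S \<gamma> (conv_pow (mu_c \<gamma> c \<mu>) n)))"
proof (intro conjI allI impI)
  fix c :: real assume "c > 0"
  have "transform_nonvanishing \<gamma> (mu_c \<gamma> c \<mu>) \<longleftrightarrow> transform_nonvanishing \<gamma> \<mu>"
    unfolding mu_c_def using assms(1,2) \<open>c > 0\<close>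
    by (intro transform_nonvanishing_convolution_iff distr_on_R_distr_f_c transform_nonvanishing_distr_f_c)
  then show "(mgf_hat \<mu> \<gamma> < \<infinity> \<and> (\<forall>z. cmgf_hat \<mu> \<gamma> z \<noteq> 0)) \<longleftrightarrow>
      (mgf_hat (mu_c \<gamma> c \<mu>) \<gamma> < \<infinity> \<and> (\<forall>z. cmgf_hat (mu_c \<gamma> c \<mu>) \<gamma> z \<noteq> 0))"
    by (simp add: transform_nonvanishing_def)
next
  fix n :: nat
  show "class_S \<gamma> (conv_pow \<mu> n) \<longleftrightarrow> (\<forall>c>0. class_S \<gamma> (conv_pow (mu_c \<gamma> c \<mu>) n))"
    using assms(1,2) by (rule class_S_conv_pow_iff_mu_c)
qed

end
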